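(* Let $x\in A^{\mathbb N}$ be an infinite word. If there exists a finite maximal bifix code $X\subset A^+$ of degree $d$ such that $\mathrm{Card}(X\cap F(x))\le d$, then $x$ is ultimately periodic.
   Context: $A$ is a finite alphabet; $F(x)$ is the set of finite factors of $x$. A bifix code is a set of nonempty words none of which is a proper prefix or proper suffix of another; it is maximal if not properly contained in another bifix code of $A^*$. A parse of $w$ with respect to $X$ is a triple $(v,z,u)$ with $w=vzu$, $v$ having no suffix in $X$, $z\in X^*$, $u$ having no prefix in $X$; the degree of $X$ is $\max_{w\in A^*}$ of the number of parses of $w$. An infinite word $a_0a_1\cdots$ is ultimately periodic if for some $n\ge1$, $a_{i+n}=a_i$ for all large $i$. *)

theory Defs
  imports Main "HOL-Library.Sublist"
begin

definition factors :: "(nat \<Rightarrow> 'a) \<Rightarrow> 'a list set" where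
  "factors x = {map x [i..<i + n] | i n. True}"

definition bifix_code :: "'a list set \<Rightarrow> bool" where
  "bifix_code X \<longleftrightarrow> [] \<notin> X \<and>
     (\<forall>u\<in>X. \<forall>v\<in>X. \<not> strict_prefix u v \<and> \<not> strict_suffix u v)"

definition maximal_bifix_code :: "'a list set \<Rightarrow> bool" where
  "maximal_bifix_code X \<longleftrightarrow> bifix_code X \<and>
     (\<forall>Y. bifix_code Y \<and> X \<subseteq> Y \<longrightarrow> Y = X)"

definition star_set :: "'a list set \<Rightarrow> 'a list set" where
  "star_set X = {concat zs | zs. set zs \<subseteq> X}"

definition parses :: "'a list set \<Rightarrow> 'a list \<Rightarrow> ('a list \<times> 'a list \<times> 'a list) set" where
  "parses X w = {(v, z, u). w = v @ z @ u \<and> (\<forall>s. suffix s v \<longrightarrow> s \<notin> X)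
      \<and> z \<in> star_set X \<and> (\<forall>p. prefix p u \<longrightarrow> p \<notin> X)}"

definition has_degree :: "'a list set \<Rightarrow> nat \<Rightarrow> bool" where
  "has_degree X d \<longleftrightarrow> (\<forall>w. card (parses X w) \<le> d) \<and> (\<exists>w. card (parses X w) = d)"

definition ultimately_periodic :: "(nat \<Rightarrow> 'a) \<Rightarrow> bool" where
  "ultimately_periodic x \<longleftrightarrow> (\<exists>n\<ge>1. \<exists>N. \<forall>i\<ge>N. x (i + n) = x i)"

end

theory Submission
  imports Defs
begin

text \<open>
  Proof of the contrapositive: let X be a finite bifix code of degree d and x an infinite word that is not ultimately periodic; we show that more than d
  codewords occur in x.

  The parses of a word w are determined by their last component, so the degree is the maximal
  number of parse tails of a word, i.e. of suffixes of w without prefix in X.  Finite degree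
  implies that every word longer than all codewords has a prefix in X; therefore parse tails
  are short, their number never decreases under right extension, and every long word w has
  at least d parse tails.  Take for w a right special factor of x of such a length.  Each
  parse tail u of w can be followed inside x by two different letters, and each extension is
  a prefix of a codeword occurring in x; thus u is a branching node of the trie of
  X \<inter> F(x).  Since a finite nonempty set of words has fewer branching nodes than elements,
  d \<le> #tails(w) < card (X \<inter> F(x)), contradicting the hypothesis.
\<close>

text \<open>The parse tails of w: suffixes of w having no prefix in X.  For a bifix code they are
  exactly the third components of the parses of w (lemma card_parses_eq_card_parse_tails).\<close>
definition parse_tails :: "'a list set \<Rightarrow> 'a list \<Rightarrow> 'a list set" where
  "parse_tails X w = {u. suffix u w \<and> (\<forall>p. prefix p u \<longrightarrow> p \<notin> X)}"

lemma finite_parse_tails: "finite (parse_tails X w)"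
proof -
  have "parse_tails X w \<subseteq> set (suffixes w)" by (auto simp: parse_tails_def)
  thus ?thesis by (rule finite_subset) simp
qed

lemma Nil_in_parse_tails: "bifix_code X \<Longrightarrow> [] \<in> parse_tails X w"
  by (auto simp: parse_tails_def bifix_code_def)

lemma bifix_code_suffix_eq:
  assumes "bifix_code X" "x \<in> X" "y \<in> X" "suffix x w" "suffix y w"
  shows "x = y"
  using suffix_same_cases[OF assms(4,5)] assms(1-3)
  unfolding bifix_code_def strict_suffix_def by blast

lemma Nil_in_star_set: "[] \<in> star_set X"
  unfolding star_set_def by (intro CollectI exI[of _ "[]"]) simp

lemma star_set_snoc: "z \<in> star_set X \<Longrightarrow> x \<in> X \<Longrightarrow> z @ x \<in> star_set X"
proof -
  assume "z \<in> star_set X" "x \<in> X"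
  then obtain zs where "set zs \<subseteq> X" "z = concat zs" by (auto simp: star_set_def)
  with \<open>x \<in> X\<close> show ?thesis
    unfolding star_set_def by (intro CollectI exI[of _ "zs @ [x]"]) auto
qed

lemma star_set_last:
  assumes "z \<in> star_set X" "z \<noteq> []"
  obtains z0 x where "z = z0 @ x" "z0 \<in> star_set X" "x \<in> X"
proof -
  obtain zs where zs: "set zs \<subseteq> X" "z = concat zs"
    using assms(1) by (auto simp: star_set_def)
  then obtain zs0 x where "zs = zs0 @ [x]" using assms(2) by (cases zs rule: rev_cases) auto
  with zs show thesis by (intro that[of "concat zs0" x]) (auto simp: star_set_def)
qed

text \<open>Every word s splits as s = v z with z in X* and v without suffix in X: strip codewords
  from the right as long as possible.\<close>
lemma factorization_exists:
  assumes "[] \<notin> X"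
  shows "\<exists>v z. s = v @ z \<and> z \<in> star_set X \<and> (\<forall>t. suffix t v \<longrightarrow> t \<notin> X)"
proof (induction s rule: length_induct)
  case (1 s)
  show ?case
  proof (cases "\<exists>t. suffix t s \<and> t \<in> X")
    case True
    then obtain t s' where t: "t \<in> X" "s = s' @ t" by (auto simp: suffix_def)
    with assms have "length s' < length s" by (cases t) auto
    with "1" obtain v z where "s' = v @ z" "z \<in> star_set X" "\<forall>t. suffix t v \<longrightarrow> t \<notin> X"
      by blast
    with t show ?thesis by (intro exI[of _ v] exI[of _ "z @ t"]) (auto intro: star_set_snoc)
  next
    case False
    then show ?thesis by (intro exI[of _ s] exI[of _ "[]"]) (auto intro: Nil_in_star_set)
  qed
qed

text \<open>For a suffix code this splitting is unique: the last codewords of two such splittings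
  are suffixes of the same word, hence equal, and we can cancel them.\<close>
lemma factorization_unique:
  assumes bf: "bifix_code X"
  shows "\<lbrakk>v @ z = v' @ z'; z \<in> star_set X; z' \<in> star_set X;
    \<forall>s. suffix s v \<longrightarrow> s \<notin> X; \<forall>s. suffix s v' \<longrightarrow> s \<notin> X\<rbrakk> \<Longrightarrow> v = v'"
proof (induction "length z + length z'" arbitrary: z z' rule: less_induct)
  case less
  have ends_in_X: "\<exists>x\<in>X. suffix x (u @ y)" if y: "y \<in> star_set X" "y \<noteq> []" for u y
  proof -
    obtain y0 x where "y = y0 @ x" "x \<in> X" using star_set_last[OF y] by blast
    then show ?thesis by (metis append_assoc suffix_def)
  qed
  have "z = [] \<longleftrightarrow> z' = []"
  proof
    assume "z = []"
    then show "z' = []" using ends_in_X[OF less.prems(3), of v'] less.prems(1,4) by auto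
  next
    assume "z' = []"
    then show "z = []" using ends_in_X[OF less.prems(2), of v] less.prems(1,5) by auto
  qed
  show ?case
  proof (cases "z = []")
    case True
    then show ?thesis using \<open>z = [] \<longleftrightarrow> z' = []\<close> less.prems(1) by simp
  next
    case False
    with \<open>z = [] \<longleftrightarrow> z' = []\<close> obtain z0 x z0' x'
      where z: "z = z0 @ x" "z0 \<in> star_set X" "x \<in> X"
        and z': "z' = z0' @ x'" "z0' \<in> star_set X" "x' \<in> X"
      using star_set_last less.prems(2,3) by metis
    have "x = x'"
      using bifix_code_suffix_eq[OF bf \<open>x \<in> X\<close> \<open>x' \<in> X\<close>, of "v @ z"]
        z(1) z'(1) less.prems(1)
      by (simp add: suffix_def)
    hence "v @ z0 = v' @ z0'" using z(1) z'(1) less.prems(1) by simp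
    moreover have "x \<noteq> []" using bf z(3) by (auto simp: bifix_code_def)
    ultimately show ?thesis using less.hyps[of z0 z0'] z z' less.prems(4,5) by simp
  qed
qed

lemma card_parses_eq_card_parse_tails:
  assumes bf: "bifix_code X"
  shows "card (parses X w) = card (parse_tails X w)"
proof -
  have "bij_betw (\<lambda>(v, z, u). u) (parses X w) (parse_tails X w)"
  proof (rule bij_betwI')
    fix p q assume "p \<in> parses X w" "q \<in> parses X w"
    then obtain v z u v' z' u' where p: "p = (v, z, u)" "w = v @ z @ u" "z \<in> star_set X"
        "\<forall>s. suffix s v \<longrightarrow> s \<notin> X"
      and q: "q = (v', z', u')" "w = v' @ z' @ u'" "z' \<in> star_set X"
        "\<forall>s. suffix s v' \<longrightarrow> s \<notin> X"
      unfolding parses_def by auto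
    show "((\<lambda>(v, z, u). u) p = (\<lambda>(v, z, u). u) q) = (p = q)"
    proof
      assume "(\<lambda>(v, z, u). u) p = (\<lambda>(v, z, u). u) q"
      hence "u = u'" and vz: "v @ z = v' @ z'" using p q by simp_all
      moreover have "v = v'" using factorization_unique[OF bf vz p(3) q(3) p(4) q(4)] .
      ultimately show "p = q" using p q by simp
    qed simp
  next
    fix p assume "p \<in> parses X w"
    thus "(\<lambda>(v, z, u). u) p \<in> parse_tails X w"
      unfolding parses_def parse_tails_def by (auto simp: suffix_def)
  next
    fix u assume "u \<in> parse_tails X w"
    then obtain s where s: "w = s @ u" "\<forall>p. prefix p u \<longrightarrow> p \<notin> X"
      unfolding parse_tails_def suffix_def by auto
    have "[] \<notin> X" using bf by (simp add: bifix_code_def)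
    then obtain v z where "s = v @ z" "z \<in> star_set X" "\<forall>t. suffix t v \<longrightarrow> t \<notin> X"
      using factorization_exists by blast
    hence "(v, z, u) \<in> parses X w" using s unfolding parses_def by auto
    thus "\<exists>p\<in>parses X w. u = (\<lambda>(v, z, u). u) p" by force
  qed
  thus ?thesis by (rule bij_betw_same_card)
qed

text \<open>The number of parse tails does not decrease when a letter b is appended: u maps to u b,
  or to the empty tail if u b is a codeword, which happens for at most one u.\<close>
lemma card_parse_tails_snoc:
  assumes bf: "bifix_code X"
  shows "card (parse_tails X s) \<le> card (parse_tails X (s @ [b]))"
proof -
  define f where "f u = (if u @ [b] \<in> X then [] else u @ [b])" for u
  have "f ` parse_tails X s \<subseteq> parse_tails X (s @ [b])"
  proof
    fix t assume "t \<in> f ` parse_tails X s"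
    then obtain u where u: "u \<in> parse_tails X s" "t = f u" by auto
    show "t \<in> parse_tails X (s @ [b])"
    proof (cases "u @ [b] \<in> X")
      case True
      then show ?thesis using u Nil_in_parse_tails[OF bf] by (simp add: f_def)
    next
      case False
      with u show ?thesis unfolding f_def parse_tails_def by auto
    qed
  qed
  moreover have "inj_on f (parse_tails X s)"
  proof (rule inj_onI)
    fix u u' assume uu: "u \<in> parse_tails X s" "u' \<in> parse_tails X s" "f u = f u'"
    show "u = u'"
    proof (cases "u @ [b] \<in> X \<and> u' @ [b] \<in> X")
      case True
      have "suffix (u @ [b]) (s @ [b])" "suffix (u' @ [b]) (s @ [b])"
        using uu(1,2) unfolding parse_tails_def by auto
      then show ?thesis using bifix_code_suffix_eq[OF bf] True by blast
    qed (use uu in \<open>auto simp: f_def split: if_splits\<close>)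
  qed
  ultimately show ?thesis using card_inj_on_le finite_parse_tails by blast
qed

lemma card_parse_tails_append:
  "bifix_code X \<Longrightarrow> card (parse_tails X s) \<le> card (parse_tails X (s @ w))"
proof (induction w rule: rev_induct)
  case (snoc b w)
  then show ?case using card_parse_tails_snoc[of X "s @ w" b] by simp
qed simp

text \<open>Finite degree forces completeness on long words: if a nonempty y at least as long as every
  codeword had no prefix in X, the powers y^0, ..., y^d would be d + 1 parse tails of y^d.\<close>
lemma long_word_has_prefix_in_code:
  assumes bf: "bifix_code X" and deg: "\<forall>w. card (parse_tails X w) \<le> d"
    and y: "y \<noteq> []" "\<forall>p\<in>X. length p \<le> length y"
  shows "\<exists>p\<in>X. prefix p y"
proof (rule ccontr)
  assume no_prefix: "\<not> (\<exists>p\<in>X. prefix p y)"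
  define pow where "pow i = concat (replicate i y)" for i
  have "length (pow i) = i * length y" for i
    by (simp add: pow_def length_concat sum_list_replicate)
  with y(1) have "inj_on pow {..d}"
    by (intro inj_onI) (metis length_greater_0_conv mult_right_cancel not_gr0)
  hence card_pows: "card (pow ` {..d}) = Suc d" by (simp add: card_image)
  have "pow ` {..d} \<subseteq> parse_tails X (pow d)"
  proof
    fix s assume "s \<in> pow ` {..d}"
    then obtain i where i: "i \<le> d" "s = pow i" by auto
    have "pow d = pow (d - i) @ pow i"
      using i(1) by (simp add: pow_def flip: concat_append replicate_add)
    hence "suffix s (pow d)" using i(2) by (simp add: suffix_def)
    moreover have "p \<notin> X" if "prefix p s" for p
    proof (cases i)
      case 0
      then show ?thesis using that i(2) bf by (simp add: pow_def bifix_code_def)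
    next
      case (Suc k)
      then have "prefix y s" using i(2) by (simp add: pow_def)
      show ?thesis
      proof
        assume "p \<in> X"
        then have "prefix p y" using that \<open>prefix y s\<close> y(2) prefix_length_prefix by blast
        with \<open>p \<in> X\<close> no_prefix show False by blast
      qed
    qed
    ultimately show "s \<in> parse_tails X (pow d)" unfolding parse_tails_def by simp
  qed
  hence "Suc d \<le> card (parse_tails X (pow d))"
    using card_pows card_mono[OF finite_parse_tails] by metis
  with deg show False using not_less_eq_eq by blast
qed

lemma finite_degree_complete:
  assumes "finite X" and bf: "bifix_code X" and deg: "\<forall>w. card (parse_tails X w) \<le> d"
  obtains M where "\<forall>y. M < length y \<longrightarrow> (\<exists>p\<in>X. prefix p y)"
proof -
  have "finite (length ` X)" using assms(1) by simp
  then obtain M where M: "\<forall>p\<in>X. length p \<le> M"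
    unfolding finite_nat_set_iff_bounded_le by blast
  have "\<exists>p\<in>X. prefix p y" if "M < length y" for y
    using M that by (intro long_word_has_prefix_in_code[OF bf deg]) auto
  then show thesis by (intro that[of M]) blast
qed

text \<open>Parse tails are shorter than any word without prefix in X, so once w is long enough,
  prepending letters to w does not change its parse tails.\<close>
lemma parse_tails_append_long:
  assumes complete: "\<forall>y. M < length y \<longrightarrow> (\<exists>p\<in>X. prefix p y)" and w: "M \<le> length w"
  shows "parse_tails X (s @ w) = parse_tails X w"
proof
  show "parse_tails X (s @ w) \<subseteq> parse_tails X w"
  proof
    fix u assume u: "u \<in> parse_tails X (s @ w)"
    have "length u \<le> M"
    proof (rule ccontr)
      assume "\<not> length u \<le> M"
      then obtain p where "p \<in> X" "prefix p u" using complete[rule_format, of u] by auto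
      with u show False unfolding parse_tails_def by blast
    qed
    hence "suffix u w" using u w suffix_length_suffix[of u "s @ w" w]
      unfolding parse_tails_def by (simp add: suffix_def)
    with u show "u \<in> parse_tails X w" unfolding parse_tails_def by simp
  qed
qed (auto simp: parse_tails_def suffix_def)

text \<open>The branching nodes of a set of words G: words u having two distinct one-letter
  extensions that are both prefixes of elements of G (inner forks of the trie of G).\<close>
definition branching :: "'a list set \<Rightarrow> 'a list set" where
  "branching G = {u. \<exists>a b. a \<noteq> b \<and>
     (\<exists>g\<in>G. prefix (u @ [a]) g) \<and> (\<exists>g\<in>G. prefix (u @ [b]) g)}"

lemma prefix_snoc_unique: "prefix (u @ [a]) g \<Longrightarrow> prefix (u @ [b]) g \<Longrightarrow> a = b"
  using prefix_same_cases[of "u @ [a]" g "u @ [b]"] by auto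

lemma finite_branching:
  assumes "finite G"
  shows "finite (branching G)"
proof (rule finite_subset)
  show "branching G \<subseteq> (\<Union>g\<in>G. set (prefixes g))"
    unfolding branching_def by (force dest: append_prefixD)
qed (use assms in simp)

lemma branching_insert_new:
  assumes "u \<in> branching (insert g G) - branching G"
  obtains a where "prefix (u @ [a]) g" "\<forall>h\<in>G. \<not> prefix (u @ [a]) h" "\<exists>h\<in>G. prefix u h"
proof -
  obtain a b ga gb where ab: "a \<noteq> b" "ga \<in> insert g G" "prefix (u @ [a]) ga"
    "gb \<in> insert g G" "prefix (u @ [b]) gb"
    using assms unfolding branching_def by blast
  have not_old: "\<not> ((\<exists>h\<in>G. prefix (u @ [a]) h) \<and> (\<exists>h\<in>G. prefix (u @ [b]) h))"
    using assms ab(1) unfolding branching_def by blast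
  have "ga = g \<or> gb = g"
  proof (rule ccontr)
    assume "\<not> (ga = g \<or> gb = g)"
    then have "ga \<in> G" "gb \<in> G" using ab(2,4) by auto
    with ab(3,5) not_old show False by blast
  qed
  moreover have "\<not> (ga = g \<and> gb = g)"
    using ab(1,3,5) prefix_snoc_unique[of u a ga b] by auto
  ultimately consider "ga = g" "gb \<in> G" | "gb = g" "ga \<in> G" using ab(2,4) by blast
  then show thesis
  proof cases
    case 1
    then show thesis using ab not_old by (intro that[of a]) (auto dest: append_prefixD)
  next
    case 2
    then show thesis using ab not_old by (intro that[of b]) (auto dest: append_prefixD)
  qed
qed

text \<open>Adding one word g creates at most one new branching node: a new node u has a branch
  supported only by g, and a second new node strictly below it on the path of g would
  have to lie inside that branch, which no old word reaches.\<close>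
lemma card_branching_insert:
  assumes "finite G"
  shows "card (branching (insert g G)) \<le> Suc (card (branching G))"
proof -
  define N where "N = branching (insert g G) - branching G"
  have le_eq: "u = u'" if uN: "u \<in> N" "u' \<in> N" and le: "length u \<le> length u'" for u u'
  proof -
    obtain a where a: "prefix (u @ [a]) g" "\<forall>h\<in>G. \<not> prefix (u @ [a]) h"
      using branching_insert_new uN(1) unfolding N_def by metis
    obtain a' h where a': "prefix (u' @ [a']) g" "h \<in> G" "prefix u' h"
      using branching_insert_new uN(2) unfolding N_def by metis
    have u_g: "prefix u g" and u'_g: "prefix u' g"
      using a(1) a'(1) by (auto dest: append_prefixD)
    show "u = u'"
    proof (rule ccontr)
      assume "u \<noteq> u'"
      with prefix_length_prefix[OF u_g u'_g le] have "strict_prefix u u'"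
        by (simp add: strict_prefix_def)
      hence "length (u @ [a]) \<le> length u'" using prefix_length_less by fastforce
      with a(1) u'_g have "prefix (u @ [a]) u'" by (rule prefix_length_prefix)
      with a'(2,3) a(2) show False using prefix_order.trans by blast
    qed
  qed
  have fin_N: "finite N" using finite_branching[of "insert g G"] assms unfolding N_def by simp
  have "\<forall>u\<in>N. \<forall>u'\<in>N. u = u'"
  proof (intro ballI)
    fix u u' assume "u \<in> N" "u' \<in> N"
    then show "u = u'"
      using le_eq[of u u'] le_eq[of u' u] by (cases "length u \<le> length u'") auto
  qed
  with fin_N have "card N \<le> 1" using card_le_Suc0_iff_eq by auto
  have "card (branching (insert g G)) \<le> card (branching G \<union> N)"
    using finite_branching[OF assms] fin_N by (intro card_mono) (auto simp: N_def)
  also have "\<dots> \<le> card (branching G) + card N" by (rule card_Un_le)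
  finally show ?thesis using \<open>card N \<le> 1\<close> by linarith
qed

lemma card_branching_less:
  "finite G \<Longrightarrow> G \<noteq> {} \<Longrightarrow> card (branching G) < card G"
proof (induction G rule: finite_ne_induct)
  case (singleton g)
  have "branching {g} = {}" unfolding branching_def by (auto dest: prefix_snoc_unique)
  then show ?case by simp
next
  case (insert g G)
  have "card (branching (insert g G)) \<le> Suc (card (branching G))"
    using insert.hyps(1) by (rule card_branching_insert)
  also have "\<dots> < Suc (card G)" using insert.IH by simp
  finally show ?case using insert.hyps(1,3) by simp
qed

text \<open>Otherwise
  a repeated window (pigeonhole) would propagate forever and make x ultimately periodic.\<close>
lemma right_special_factor:
  fixes x :: "nat \<Rightarrow> 'a::finite"
  assumes "0 < n" and not_periodic: "\<not> ultimately_periodic x"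
  obtains i i' where "map x [i..<i + n] = map x [i'..<i' + n]" "x (i + n) \<noteq> x (i' + n)"
proof -
  define W where "W i = map x [i..<i + n]" for i
  have W_Suc: "W (Suc k) = tl (W k) @ [x (k + n)]" for k
    using \<open>0 < n\<close> by (simp add: W_def upt_conv_Cons)
  have hd_W: "hd (W k) = x k" for k
    using \<open>0 < n\<close> by (simp add: W_def upt_conv_Cons)
  have "range W \<subseteq> {xs. length xs = n}" by (auto simp: W_def)
  moreover have "finite {xs :: 'a list. length xs = n}"
    using finite_lists_length_eq[OF finite_UNIV, of n] by simp
  ultimately have "finite (range W)" by (rule finite_subset)
  hence "\<not> inj W" using finite_imageD infinite_UNIV_nat by blast
  then obtain i j where ij: "i < j" "W i = W j"
    unfolding inj_def by (metis linorder_neqE_nat)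
  show thesis
  proof (rule ccontr)
    assume "\<not> thesis"
    hence same_next: "W k = W k' \<Longrightarrow> x (k + n) = x (k' + n)" for k k'
      using that unfolding W_def by blast
    have W_shift: "W (i + t) = W (j + t)" for t
    proof (induction t)
      case (Suc t)
      have "W (Suc (i + t)) = W (Suc (j + t))"
        using same_next[OF Suc.IH] Suc.IH by (simp only: W_Suc)
      then show ?case by simp
    qed (use ij in simp)
    have "x (k + (j - i)) = x k" if "i \<le> k" for k
    proof -
      obtain t where "k = i + t" using le_Suc_ex[OF \<open>i \<le> k\<close>] by blast
      moreover have "k + (j - i) = j + t" using \<open>k = i + t\<close> ij(1) by simp
      ultimately show ?thesis
        using hd_W[of "i + t"] hd_W[of "j + t"] W_shift[of t] by (simp add: add.commute)
    qed
    hence "ultimately_periodic x"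
      unfolding ultimately_periodic_def using ij(1) by (intro exI[of _ "j - i"]) auto
    with not_periodic show False by blast
  qed
qed

lemma prefix_segment_mono: "k \<le> K \<Longrightarrow> prefix (map x [j..<j + k]) (map x [j..<j + K])"
  by (metis add_le_cancel_left take_is_prefix take_map take_upt)

lemma prefix_segment:
  assumes "prefix p (map x [j..<j + K])"
  shows "p = map x [j..<j + length p]"
proof -
  have "length p \<le> K" using prefix_length_le[OF assms] by simp
  have "p = take (length p) (map x [j..<j + K])" using assms by (auto simp: prefix_def)
  also have "\<dots> = map x [j..<j + length p]" using \<open>length p \<le> K\<close> by (simp add: take_map)
  finally show ?thesis .
qed

text \<open>If every word longer than M has a prefix in X, then each parse tail u of an occurrence
  x[i..i+n) of a factor, extended by the next letter x(i+n), is a prefix of a codeword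
  occurring in x: read a codeword in x starting at the position of u.\<close>
lemma parse_tail_extends_to_factor:
  fixes x :: "nat \<Rightarrow> 'a"
  assumes complete: "\<forall>y. M < length y \<longrightarrow> (\<exists>p\<in>X. prefix p y)"
    and u: "u \<in> parse_tails X (map x [i..<i + n])"
  shows "\<exists>g\<in>X \<inter> factors x. prefix (u @ [x (i + n)]) g"
proof -
  define m where "m = length u"
  define j where "j = i + (n - m)"
  obtain zs where zs: "map x [i..<i + n] = zs @ u"
    and no_prefix: "\<forall>p. prefix p u \<longrightarrow> p \<notin> X"
    using u by (auto simp: parse_tails_def suffix_def)
  have "length zs + m = n" using arg_cong[OF zs, of length] by (simp add: m_def)
  hence j_m: "j + m = i + n" by (simp add: j_def)
  have "u = drop (n - m) (map x [i..<i + n])" using zs \<open>length zs + m = n\<close> by simp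
  hence u_seg: "u = map x [j..<j + m]" using j_m by (simp add: j_def drop_map)
  obtain p where p: "p \<in> X" "prefix p (map x [j..<j + Suc M])"
    using complete[rule_format, of "map x [j..<j + Suc M]"] by auto
  define k where "k = length p"
  have p_seg: "p = map x [j..<j + k]" unfolding k_def by (rule prefix_segment[OF p(2)])
  have "m < k"
  proof (rule ccontr)
    assume "\<not> m < k"
    hence "prefix p u" unfolding u_seg p_seg by (simp add: prefix_segment_mono)
    with no_prefix p(1) show False by blast
  qed
  have "u @ [x (i + n)] = map x [j..<j + Suc m]" using u_seg j_m by simp
  also have "prefix \<dots> p"
    unfolding p_seg by (rule prefix_segment_mono) (use \<open>m < k\<close> in simp)
  finally show ?thesis using p(1) p_seg unfolding factors_def by blast
qed

lemma parse_tails_of_right_special_factor: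
  fixes x :: "nat \<Rightarrow> 'a"
  assumes complete: "\<forall>y. M < length y \<longrightarrow> (\<exists>p\<in>X. prefix p y)"
    and same: "map x [i..<i + n] = map x [i'..<i' + n]" and differ: "x (i + n) \<noteq> x (i' + n)"
  shows "parse_tails X (map x [i..<i + n]) \<subseteq> branching (X \<inter> factors x)"
proof
  fix u assume u: "u \<in> parse_tails X (map x [i..<i + n])"
  have "\<exists>g\<in>X \<inter> factors x. prefix (u @ [x (i + n)]) g"
    using parse_tail_extends_to_factor[OF complete u] .
  moreover have "\<exists>g\<in>X \<inter> factors x. prefix (u @ [x (i' + n)]) g"
    using parse_tail_extends_to_factor[OF complete u[unfolded same]] .
  ultimately show "u \<in> branching (X \<inter> factors x)"
    using differ unfolding branching_def by blast
qed

theorem mainTheorem14: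
  fixes x :: "nat \<Rightarrow> 'a::finite" and X :: "'a list set" and d :: nat
  assumes "finite X"
    and "maximal_bifix_code X"
    and "has_degree X d"
    and "card (X \<inter> factors x) \<le> d"
  shows "ultimately_periodic x"
proof (rule ccontr)
  assume not_periodic: "\<not> ultimately_periodic x"
  have bf: "bifix_code X" using assms(2) by (simp add: maximal_bifix_code_def)
  have deg: "\<forall>w. card (parse_tails X w) \<le> d" and "\<exists>w0. card (parse_tails X w0) = d"
    using assms(3) by (simp_all add: has_degree_def card_parses_eq_card_parse_tails[OF bf])
  then obtain w0 where w0: "card (parse_tails X w0) = d" by blast
  obtain M where complete: "\<forall>y. M < length y \<longrightarrow> (\<exists>p\<in>X. prefix p y)"
    using finite_degree_complete[OF assms(1) bf deg] by blast
  obtain i i' where same: "map x [i..<i + Suc M] = map x [i'..<i' + Suc M]"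
    and differ: "x (i + Suc M) \<noteq> x (i' + Suc M)"
    using right_special_factor[OF _ not_periodic, of "Suc M"] by blast
  define w where "w = map x [i..<i + Suc M]"
  let ?G = "X \<inter> factors x"
  have tails_branching: "parse_tails X w \<subseteq> branching ?G"
    unfolding w_def by (rule parse_tails_of_right_special_factor[OF complete same differ])
  have "?G \<noteq> {}"
    using tails_branching Nil_in_parse_tails[OF bf, of w] by (auto simp: branching_def)
  have "d \<le> card (parse_tails X (w0 @ w))" using w0 card_parse_tails_append[OF bf] by metis
  also have "\<dots> = card (parse_tails X w)"
    using parse_tails_append_long[OF complete] by (simp add: w_def)
  also have "\<dots> \<le> card (branching ?G)"
    using tails_branching finite_branching[of ?G] assms(1) by (intro card_mono) simp_all
  also have "\<dots> < card ?G"
    using assms(1) \<open>?G \<noteq> {}\<close> by (intro card_branching_less) simp_all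
  finally show False using assms(4) by simp
qed

end
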